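(* Let $n\ge 2$, let $S$ be a linear subspace of $\mathbb R^n$ of dimension $D$, and let $\xi=(\xi_1,\dots,\xi_n)$ be a random vector with independent coordinates. Let $\sigma>0$ and $c>0$, and assume that for every $i=1,\dots,n$, $$\log\mathbb E\big[e^{\lambda\xi_i}\big]\le\frac{\lambda^2\sigma^2}{2(1-|\lambda|c)}\qquad\text{for all }\lambda\in(-1/c,1/c).$$ Then, with $\kappa=18$, for all $x,u>0$, $$\mathbb P\Big[|\Pi_S\xi|_2^2\ge\kappa^2\Big(\sigma^2+\frac{2cu}{\kappa}\Big)(D+x),\ \ |\Pi_S\xi|_\infty\le u\Big]\le e^{-x}.$$ Moreover, for all $x>0$, $$\mathbb P\big(|\Pi_S\xi|_\infty\ge x\big)\le 2n\exp\Big[-\frac{x^2}{2\Lambda_2^2(S)(\sigma^2+cx)}\Big].$$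
   Context: $\Pi_S$ is the orthogonal projection of $\mathbb R^n$ onto $S$ for the Euclidean inner product $\langle\cdot,\cdot\rangle$. For $x\in\mathbb R^n$, $|x|_2=\sqrt{\langle x,x\rangle}$ and $|x|_\infty=\max_i|x_i|$. Let $e_1,\dots,e_n$ be the canonical basis of $\mathbb R^n$. Then $\Lambda_2(S)=\max_{i=1,\dots,n}|\Pi_Se_i|_2$. *)

theory Defs
  imports "HOL-Probability.Probability"
begin

definition orth_proj :: "(real^'n) set \<Rightarrow> real^'n \<Rightarrow> real^'n" where
  "orth_proj S x = (THE p. p \<in> S \<and> (\<forall>y\<in>S. inner (x - p) y = 0))"

definition linf_norm :: "real^'n \<Rightarrow> real" where
  "linf_norm x = Max (range (\<lambda>i. \<bar>x $ i\<bar>))"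

definition Lambda2 :: "(real^'n) set \<Rightarrow> real" where
  "Lambda2 S = Max (range (\<lambda>i. norm (orth_proj S (axis i 1))))"

end

theory Submission
  imports Defs "HOL-Analysis.Homotopy"
begin

text \<open>
  Both claims reduce to Bernstein's inequality for linear forms \<open>\<langle>v, \<xi>\<rangle>\<close>, proved from the
  product formula for moment generating functions of independent variables and the
  Chernoff bound.  The sup-norm bound applies it to the \<open>2n\<close> forms \<open>\<plusminus>\<langle>\<Pi>\<^sub>S e\<^sub>i, \<xi>\<rangle>\<close>, which are
  exactly the coordinates of \<open>\<plusminus>\<Pi>\<^sub>S \<xi>\<close>.  The Euclidean bound is an \<open>\<epsilon>\<close>-net argument: on the
  event in question the direction of \<open>\<Pi>\<^sub>S \<xi>\<close> is a unit vector of \<open>S\<close> with coordinates at most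
  \<open>u / r\<close>, it is within \<open>1/2\<close> of some point of a net of such vectors, and that point
  detects half of the norm; a volume argument bounds the net by \<open>5 ^ D\<close> points.
\<close>

definition coord_proj :: "'a::euclidean_space set \<Rightarrow> 'a \<Rightarrow> 'a" where
  "coord_proj B z = (\<Sum>j\<in>B. (z \<bullet> j) *\<^sub>R j)"

lemma coord_proj_inner:
  assumes "B \<subseteq> Basis" "j \<in> Basis"
  shows "coord_proj B z \<bullet> j = (if j \<in> B then z \<bullet> j else 0)"
proof -
  have "coord_proj B z \<bullet> j = (\<Sum>i\<in>B. if i = j then z \<bullet> j else 0)"
    unfolding coord_proj_def inner_sum_left
    using assms by (intro sum.cong) (auto simp: inner_Basis)
  then show ?thesis
    using assms finite_subset[OF assms(1)] by simp
qed

lemma coord_proj_add: "coord_proj B (x + y) = coord_proj B x + coord_proj B y"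
  by (simp add: coord_proj_def inner_add_left scaleR_add_left sum.distrib)

lemma norm_coord_proj_le:
  assumes "B \<subseteq> Basis"
  shows "norm (coord_proj B z) \<le> norm z"
proof -
  have "(norm (coord_proj B z))\<^sup>2 = (\<Sum>j\<in>Basis. (coord_proj B z \<bullet> j) * (coord_proj B z \<bullet> j))"
    unfolding power2_norm_eq_inner by (rule euclidean_inner)
  also have "\<dots> = (\<Sum>j\<in>Basis. (if j \<in> B then z \<bullet> j else 0)\<^sup>2)"
    by (intro sum.cong) (auto simp: coord_proj_inner assms power2_eq_square)
  also have "\<dots> \<le> (\<Sum>j\<in>Basis. (z \<bullet> j) * (z \<bullet> j))"
    by (intro sum_mono) (auto simp: power2_eq_square)
  also have "\<dots> = (norm z)\<^sup>2"
    unfolding power2_norm_eq_inner by (rule euclidean_inner[symmetric])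
  finally show ?thesis
    by (rule power2_le_imp_le) simp
qed

lemma coord_proj_supported:
  assumes "B \<subseteq> Basis" "\<And>j. j \<in> Basis \<Longrightarrow> j \<notin> B \<Longrightarrow> y \<bullet> j = 0"
  shows "coord_proj B y = y"
  by (rule euclidean_eqI) (use assms in \<open>auto simp: coord_proj_inner\<close>)

text \<open>It is a full-dimensional body whose volume scales
  like \<open>r ^ card B\<close>, which is what a volume argument inside a \<open>card B\<close>-dimensional subspace
  needs.\<close>
definition coord_cylinder :: "'a::euclidean_space set \<Rightarrow> real \<Rightarrow> 'a set" where
  "coord_cylinder B r = {z. norm (coord_proj B z) < r \<and> (\<forall>j\<in>Basis - B. \<bar>z \<bullet> j\<bar> < 1)}"

lemma coord_cylinder_lmeasurable:
  assumes B: "B \<subseteq> Basis"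
  shows "coord_cylinder B r \<in> lmeasurable"
proof (rule bounded_set_imp_lmeasurable)
  have "coord_cylinder B r \<in> sets borel"
    unfolding coord_cylinder_def coord_proj_def by measurable
  then show "coord_cylinder B r \<in> sets lebesgue"
    by auto
  have "norm z \<le> real DIM('a) * max r 1" if "z \<in> coord_cylinder B r" for z
  proof -
    have "\<bar>z \<bullet> j\<bar> \<le> max r 1" if j: "j \<in> Basis" for j
    proof (cases "j \<in> B")
      case True
      then have "\<bar>z \<bullet> j\<bar> \<le> norm (coord_proj B z)"
        using Basis_le_norm[OF j, of "coord_proj B z"] B j by (simp add: coord_proj_inner)
      then show ?thesis using \<open>z \<in> coord_cylinder B r\<close> by (auto simp: coord_cylinder_def)
    next
      case False
      then show ?thesis using \<open>z \<in> coord_cylinder B r\<close> j by (force simp: coord_cylinder_def)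
    qed
    then have "(\<Sum>j\<in>Basis. \<bar>z \<bullet> j\<bar>) \<le> (\<Sum>j\<in>(Basis::'a set). max r 1)"
      by (intro sum_mono)
    then show ?thesis
      using norm_le_l1[of z] by simp
  qed
  then show "bounded (coord_cylinder B r)"
    unfolding bounded_iff by blast
qed

text \<open>The cylinder contains a ball around the origin, hence has positive volume.\<close>
lemma coord_cylinder_measure_pos:
  assumes B: "B \<subseteq> Basis" and r: "r > 0"
  shows "measure lebesgue (coord_cylinder B r) > 0"
proof -
  have "ball 0 (min r 1) \<subseteq> coord_cylinder B r"
  proof
    fix z :: 'a assume "z \<in> ball 0 (min r 1)"
    then have "norm z < r" "norm z < 1" by auto
    then show "z \<in> coord_cylinder B r"
      using norm_coord_proj_le[OF B, of z] Basis_le_norm[of _ z]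
      by (fastforce simp: coord_cylinder_def)
  qed
  then have "measure lebesgue (ball (0::'a) (min r 1)) \<le> measure lebesgue (coord_cylinder B r)"
    by (intro measure_mono_fmeasurable coord_cylinder_lmeasurable B) auto
  moreover have "0 < measure lborel (ball (0::'a) (min r 1))"
    using r by (intro content_ball_pos) auto
  moreover have "measure lborel (ball (0::'a) (min r 1)) = measure lebesgue (ball (0::'a) (min r 1))"
    by simp
  ultimately show ?thesis by linarith
qed

text \<open>Scaling the radius by \<open>s\<close> multiplies the volume by \<open>s ^ card B\<close>: the cylinder of radius
  \<open>s * r\<close> is the image of the one of radius \<open>r\<close> under the diagonal map scaling the
  \<open>B\<close>-coordinates by \<open>s\<close>.\<close>
lemma coord_cylinder_measure_scale:
  assumes B: "B \<subseteq> Basis" and s: "s > 0"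
  shows "measure lebesgue (coord_cylinder B (s * r)) = s ^ card B * measure lebesgue (coord_cylinder B r)"
proof -
  define a where "a j = (if j \<in> B then s else 1)" for j :: 'a
  \<comment> \<open>written as an affine map \<open>0 + \<dots>\<close> to match \<open>lebesgue_affine_euclidean\<close>\<close>
  define T where "T = (\<lambda>x. 0 + (\<Sum>j\<in>Basis. (a j * (x \<bullet> j)) *\<^sub>R j))"
  have a0: "j \<in> Basis \<Longrightarrow> a j \<noteq> 0" for j using s by (simp add: a_def)
  have Tj: "T x \<bullet> j = a j * (x \<bullet> j)" if "j \<in> Basis" for x j
    using that by (simp add: T_def inner_sum_left inner_Basis if_distrib cong: if_cong)
  have "coord_proj B (T x) = s *\<^sub>R coord_proj B x" for x
    unfolding coord_proj_def scaleR_sum_right using B by (intro sum.cong) (auto simp: Tj a_def)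
  then have preimage: "T -` coord_cylinder B (s * r) = coord_cylinder B r"
    using s by (auto simp: coord_cylinder_def Tj a_def)
  have prod_a: "(\<Prod>j\<in>Basis. \<bar>a j\<bar>) = s ^ card B"
  proof -
    have "(\<Prod>j\<in>Basis. \<bar>a j\<bar>) = (\<Prod>j\<in>Basis \<inter> B. s)"
      using s by (simp add: a_def prod.inter_restrict[symmetric] cong: if_cong)
    also have "Basis \<inter> B = B" using B by auto
    finally show ?thesis by simp
  qed
  have Tmeas: "T \<in> lebesgue \<rightarrow>\<^sub>M lebesgue"
    unfolding T_def by (rule lebesgue_affine_measurable) (rule a0)
  have meas: "coord_cylinder B (s * r) \<in> sets lebesgue"
    using coord_cylinder_lmeasurable[OF B] by auto
  have "emeasure lebesgue (coord_cylinder B (s * r))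
      = emeasure (density (distr lebesgue lebesgue T) (\<lambda>_. \<Prod>j\<in>Basis. \<bar>a j\<bar>)) (coord_cylinder B (s * r))"
    unfolding T_def by (subst lebesgue_affine_euclidean[of a 0, OF a0, symmetric]) auto
  also have "\<dots> = ennreal (\<Prod>j\<in>Basis. \<bar>a j\<bar>) * emeasure (distr lebesgue lebesgue T) (coord_cylinder B (s * r))"
    using meas by (simp add: emeasure_density nn_integral_cmult_indicator)
  also have "\<dots> = ennreal (s ^ card B) * emeasure lebesgue (coord_cylinder B r)"
    using meas by (simp add: emeasure_distr Tmeas preimage prod_a)
  finally have "emeasure lebesgue (coord_cylinder B (s * r)) = ennreal (s ^ card B) * emeasure lebesgue (coord_cylinder B r)" .
  then show ?thesis
    using s by (simp add: measure_def enn2real_mult)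
qed

text \<open>The cylinders of radius \<open>1/4\<close> around
  the points are disjoint and lie in the cylinder of radius \<open>5/4\<close>.\<close>
lemma coordinate_packing_bound:
  fixes P B :: "'a::euclidean_space set"
  assumes B: "B \<subseteq> Basis" and fin: "finite P"
    and supp: "\<And>y j. y \<in> P \<Longrightarrow> j \<in> Basis \<Longrightarrow> j \<notin> B \<Longrightarrow> y \<bullet> j = 0"
    and nrm: "\<And>y. y \<in> P \<Longrightarrow> norm y \<le> 1"
    and sep: "\<And>y y'. y \<in> P \<Longrightarrow> y' \<in> P \<Longrightarrow> y \<noteq> y' \<Longrightarrow> 1/2 \<le> dist y y'"
  shows "real (card P) \<le> 5 ^ card B"
proof -
  define C where "C = coord_cylinder B (1/4)"
  define F where "F y = (+) y ` C" for y
  have C_lm: "C \<in> lmeasurable" and C_pos: "measure lebesgue C > 0"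
    unfolding C_def using B by (auto intro: coord_cylinder_lmeasurable coord_cylinder_measure_pos)
  have F_lm: "F y \<in> lmeasurable" for y
    unfolding F_def using C_lm by (rule measurable_translation)
  have F_finite: "emeasure lebesgue (F y) \<noteq> \<infinity>" for y
    using F_lm[of y] by (auto simp: fmeasurable_def simp del: emeasure_completion)
  have proj_P: "coord_proj B y = y" if "y \<in> P" for y
    using B supp[OF that] by (rule coord_proj_supported)
  have F_sub: "F y \<subseteq> coord_cylinder B (5 * (1/4))" if y: "y \<in> P" for y
  proof
    fix z assume "z \<in> F y"
    then obtain a where a: "a \<in> C" "z = y + a" by (auto simp: F_def)
    have "norm (coord_proj B z) \<le> norm y + norm (coord_proj B a)"
      using a y by (simp add: coord_proj_add proj_P norm_triangle_ineq)
    also have "\<dots> < 5 * (1/4)" using nrm[OF y] a by (simp add: C_def coord_cylinder_def)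
    finally show "z \<in> coord_cylinder B (5 * (1/4))"
      using a supp[OF y] by (auto simp: C_def coord_cylinder_def inner_add_left)
  qed
  have F_disj: "disjoint_family_on F P"
    unfolding disjoint_family_on_def
  proof (intro ballI impI)
    fix y y' assume y: "y \<in> P" "y' \<in> P" "y \<noteq> y'"
    show "F y \<inter> F y' = {}"
    proof (rule ccontr)
      assume "F y \<inter> F y' \<noteq> {}"
      then obtain a a' where a: "a \<in> C" "a' \<in> C" "y + a = y' + a'" by (auto simp: F_def)
      then have "coord_proj B (y + a) = coord_proj B (y' + a')" by simp
      then have "y - y' = coord_proj B a' - coord_proj B a"
        using y by (simp add: coord_proj_add proj_P algebra_simps)
      then have "dist y y' \<le> norm (coord_proj B a') + norm (coord_proj B a)"
        by (simp add: dist_norm norm_triangle_ineq4)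
      also have "\<dots> < 1/2" using a by (simp add: C_def coord_cylinder_def)
      finally show False using sep[OF y] by simp
    qed
  qed
  have "real (card P) * measure lebesgue C = (\<Sum>y\<in>P. measure lebesgue (F y))"
    by (simp add: F_def measure_translation)
  also have "\<dots> = measure lebesgue (\<Union>y\<in>P. F y)"
    using fin F_disj F_lm F_finite
    by (intro measure_finite_Union[symmetric]) (auto simp: fmeasurable_def simp del: emeasure_completion)
  also have "\<dots> \<le> measure lebesgue (coord_cylinder B (5 * (1/4)))"
    using F_sub
    by (intro measure_mono_fmeasurable coord_cylinder_lmeasurable[OF B] sets.finite_UN[OF fin]
        fmeasurableD[OF F_lm]) auto
  also have "\<dots> = 5 ^ card B * measure lebesgue C"
    unfolding C_def using B by (rule coord_cylinder_measure_scale) simp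
  finally show ?thesis
    using C_pos by simp
qed

text \<open>The same bound in an arbitrary subspace, transported along a linear isometry onto a
  coordinate subspace of the same dimension.\<close>
lemma subspace_packing_bound:
  fixes S P :: "'a::euclidean_space set"
  assumes S: "subspace S" and PS: "P \<subseteq> S" and fin: "finite P"
    and nrm: "\<And>y. y \<in> P \<Longrightarrow> norm y \<le> 1"
    and sep: "\<And>y y'. y \<in> P \<Longrightarrow> y' \<in> P \<Longrightarrow> y \<noteq> y' \<Longrightarrow> 1/2 \<le> dist y y'"
  shows "real (card P) \<le> 5 ^ dim S"
proof -
  obtain B :: "'a set" where B: "B \<subseteq> Basis" "card B = dim S"
    using ex_card[of "dim S" "Basis :: 'a set"] dim_subset_UNIV[of S] by auto
  define T where "T = {x::'a. \<forall>i\<in>Basis. i \<notin> B \<longrightarrow> x \<bullet> i = 0}"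
  have T: "subspace T"
    unfolding T_def by (rule subspace_substandard)
  have "dim S = dim T"
    using B by (simp add: T_def dim_substandard)
  then obtain f where f: "linear f" "f ` S = T" "\<And>x. x \<in> S \<Longrightarrow> norm (f x) = norm x"
    using isometry_subspaces[OF S T] by blast
  have dist_f: "dist (f x) (f y) = dist x y" if "x \<in> S" "y \<in> S" for x y
    using f(3)[of "x - y"] that S by (simp add: dist_norm linear_diff[OF f(1)] subspace_diff)
  have "real (card (f ` P)) \<le> 5 ^ card B"
  proof (rule coordinate_packing_bound[OF B(1)])
    show "finite (f ` P)" using fin by simp
    show "y \<bullet> j = 0" if "y \<in> f ` P" "j \<in> Basis" "j \<notin> B" for y j
      using that PS f(2) by (auto simp: T_def)
    show "norm y \<le> 1" if "y \<in> f ` P" for y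
      using that PS f(3) nrm by auto
    show "1/2 \<le> dist y y'" if yy: "y \<in> f ` P" "y' \<in> f ` P" "y \<noteq> y'" for y y'
    proof -
      obtain x x' where x: "x \<in> P" "x' \<in> P" "y = f x" "y' = f x'"
        using yy by auto
      then have "x \<noteq> x'" using yy(3) by auto
      moreover have "dist y y' = dist x x'"
        using x dist_f[of x x'] PS by auto
      ultimately show ?thesis
        using x sep[of x x'] by simp
    qed
  qed
  moreover have "inj_on f P"
  proof (rule inj_onI)
    fix x y assume "x \<in> P" "y \<in> P" "f x = f y"
    then have "dist x y = 0" using dist_f[of x y] PS by auto
    then show "x = y" by simp
  qed
  ultimately show ?thesis
    using B(2) by (simp add: card_image)
qed

text \<open>Every subset of the unit ball of \<open>S\<close> has a \<open>1/2\<close>-net inside it with at most \<open>5 ^ dim S\<close>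
  points: a maximal \<open>1/2\<close>-separated subset, which exists because separated sets are
  bounded in size.\<close>
lemma half_net_exists:
  fixes S T :: "'a::euclidean_space set"
  assumes S: "subspace S" and TS: "T \<subseteq> S" and nrm: "\<And>y. y \<in> T \<Longrightarrow> norm y \<le> 1"
  obtains N where "finite N" "N \<subseteq> T" "real (card N) \<le> 5 ^ dim S"
    "\<And>v. v \<in> T \<Longrightarrow> \<exists>v'\<in>N. dist v v' < 1/2"
proof -
  define separated where
    "separated N \<longleftrightarrow> finite N \<and> N \<subseteq> T \<and> (\<forall>y\<in>N. \<forall>y'\<in>N. y \<noteq> y' \<longrightarrow> 1/2 \<le> dist y y')" for N
  have card_bound: "real (card N) \<le> 5 ^ dim S" if "separated N" for N
    using that TS nrm unfolding separated_def by (intro subspace_packing_bound[OF S]) auto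
  have "\<forall>N. separated N \<longrightarrow> card N < 5 ^ dim S + 1"
  proof (intro allI impI)
    fix N assume "separated N"
    then have "real (card N) \<le> real (5 ^ dim S)" using card_bound by simp
    then show "card N < 5 ^ dim S + 1" by linarith
  qed
  moreover have "separated {}" by (simp add: separated_def)
  ultimately obtain N where N: "separated N" and maximal: "\<And>N'. separated N' \<Longrightarrow> card N' \<le> card N"
    using ex_has_greatest_nat[of separated "{}" card "5 ^ dim S + 1"] by blast
  show ?thesis
  proof (rule that)
    show "finite N" "N \<subseteq> T" using N by (auto simp: separated_def)
    show "real (card N) \<le> 5 ^ dim S" using card_bound[OF N] .
  next
    fix v assume v: "v \<in> T"
    show "\<exists>v'\<in>N. dist v v' < 1/2"
    proof (rule ccontr)
      assume "\<not> ?thesis"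
      then have far: "\<forall>v'\<in>N. 1/2 \<le> dist v v'" by auto
      then have "v \<notin> N" by fastforce
      have "separated (insert v N)"
        using N v far unfolding separated_def by (auto simp: dist_commute)
      have "card (insert v N) = card N + 1"
        using N \<open>v \<notin> N\<close> by (simp add: separated_def)
      then show False
        using maximal[OF \<open>separated (insert v N)\<close>] by simp
    qed
  qed
qed

text \<open>The definite description in \<open>orth_proj\<close> is well defined: the orthogonal decomposition of
  \<open>x\<close> along \<open>S\<close> exists and its \<open>S\<close>-component is unique.\<close>
lemma orth_proj_characterization:
  assumes S: "subspace S"
  shows "orth_proj S x \<in> S \<and> (\<forall>y\<in>S. inner (x - orth_proj S x) y = 0)"
proof -
  obtain p q where p: "p \<in> span S" and q: "\<And>w. w \<in> span S \<Longrightarrow> orthogonal q w" and x: "x = p + q"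
    using orthogonal_subspace_decomp_exists[of S x] by blast
  have span_S: "span S = S" using S by (simp add: span_eq_iff)
  have p_char: "p \<in> S \<and> (\<forall>w\<in>S. inner (x - p) w = 0)"
    using p q x span_S by (auto simp: orthogonal_def)
  have "orth_proj S x = p"
    unfolding orth_proj_def
  proof (rule the_equality)
    show "p \<in> S \<and> (\<forall>w\<in>S. inner (x - p) w = 0)" by (rule p_char)
  next
    fix p' assume p': "p' \<in> S \<and> (\<forall>w\<in>S. inner (x - p') w = 0)"
    have "p - p' \<in> S" using p' p_char S by (simp add: subspace_diff)
    then have "inner (p - p') (p - p') = inner (x - p') (p - p') - inner (x - p) (p - p')"
      by (simp add: inner_diff_left)
    also have "\<dots> = 0" using p' p_char \<open>p - p' \<in> S\<close> by simp
    finally show "p' = p" by simp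
  qed
  then show ?thesis using p_char by simp
qed

lemma orth_proj_in: "subspace S \<Longrightarrow> orth_proj S x \<in> S"
  using orth_proj_characterization by blast

lemma inner_orth_proj:
  assumes S: "subspace S" and y: "y \<in> S"
  shows "y \<bullet> orth_proj S z = y \<bullet> z"
proof -
  have "inner (z - orth_proj S z) y = 0"
    using orth_proj_characterization[OF S] y by blast
  then have "y \<bullet> (z - orth_proj S z) = 0"
    by (simp add: inner_commute)
  then show ?thesis by (simp add: inner_diff_right)
qed

lemma orth_proj_component:
  assumes S: "subspace S"
  shows "orth_proj S z $ i = orth_proj S (axis i 1) \<bullet> z"
proof -
  have "orth_proj S z $ i = orth_proj S z \<bullet> axis i 1"
    by (simp add: cart_eq_inner_axis)
  also have "\<dots> = orth_proj S z \<bullet> orth_proj S (axis i 1)"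
    by (rule inner_orth_proj[OF S orth_proj_in[OF S], symmetric])
  also have "\<dots> = orth_proj S (axis i 1) \<bullet> orth_proj S z"
    by (rule inner_commute)
  also have "\<dots> = orth_proj S (axis i 1) \<bullet> z"
    by (rule inner_orth_proj[OF S orth_proj_in[OF S]])
  finally show ?thesis .
qed

lemma component_le_linf_norm: "\<bar>x $ j\<bar> \<le> linf_norm x"
  unfolding linf_norm_def by (rule Max_ge) auto

lemma linf_norm_attained: "\<exists>j. linf_norm x = \<bar>x $ j\<bar>"
proof -
  have "linf_norm x \<in> range (\<lambda>j. \<bar>x $ j\<bar>)"
    unfolding linf_norm_def by (rule Max_in) auto
  then show ?thesis by auto
qed

lemma sum_squares_components: "(\<Sum>j\<in>UNIV. (v $ j)^2) = (norm v)^2" for v :: "real^'n"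
proof -
  have "(\<Sum>j\<in>UNIV. (v $ j)^2) = v \<bullet> v" by (simp add: inner_vec_def power2_eq_square)
  then show ?thesis by (simp add: dot_square_norm)
qed

text \<open>The projected basis vectors \<open>\<Pi>\<^sub>S e\<^sub>i\<close> have norm at most \<open>\<Lambda>\<^sub>2(S)\<close> by definition, and
  coordinates \<open>(\<Pi>\<^sub>S e\<^sub>i)\<^sub>j = \<langle>\<Pi>\<^sub>S e\<^sub>i, \<Pi>\<^sub>S e\<^sub>j\<rangle>\<close> at most \<open>\<Lambda>\<^sub>2(S)\<^sup>2\<close> by Cauchy-Schwarz.\<close>
lemma norm_orth_proj_axis_le: "norm (orth_proj S (axis i 1)) \<le> Lambda2 S"
  unfolding Lambda2_def by (rule Max_ge) auto

lemma Lambda2_nonneg: "Lambda2 S \<ge> 0"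
  using norm_orth_proj_axis_le[of S undefined] norm_ge_zero order.trans by blast

lemma orth_proj_axis_component_le:
  assumes S: "subspace S"
  shows "\<bar>orth_proj S (axis i 1) $ j\<bar> \<le> (Lambda2 S)^2"
proof -
  let ?e = "\<lambda>i. orth_proj S (axis i (1::real))"
  have "?e i $ j = ?e i \<bullet> ?e j"
    by (simp add: cart_eq_inner_axis inner_orth_proj[OF S orth_proj_in[OF S]])
  then have "\<bar>?e i $ j\<bar> \<le> norm (?e i) * norm (?e j)" by (simp add: Cauchy_Schwarz_ineq2)
  also have "\<dots> \<le> Lambda2 S * Lambda2 S"
    using norm_orth_proj_axis_le Lambda2_nonneg by (intro mult_mono) auto
  finally show ?thesis by (simp add: power2_eq_square)
qed

text \<open>Directions of
  projections with small sup-norm lie in such a set, and for them the Bernstein bound has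
  a good subexponential term.\<close>
definition flat_ball :: "(real^'n) set \<Rightarrow> real \<Rightarrow> (real^'n) set" where
  "flat_ball S a = {v \<in> S. norm v \<le> 1 \<and> (\<forall>j. \<bar>v $ j\<bar> \<le> a)}"

text \<open>Deterministic core of the net argument: if \<open>|\<Pi>\<^sub>S z|\<^sub>2 \<ge> r\<close> and \<open>|\<Pi>\<^sub>S z|\<^sub>\<infinity> \<le> u\<close>, then the
  direction of \<open>\<Pi>\<^sub>S z\<close> lies in \<open>flat_ball S (u / r)\<close>, and a \<open>1/2\<close>-net of that set contains a
  vector \<open>v'\<close> with \<open>\<langle>v', z\<rangle> \<ge> r / 2\<close>.\<close>
lemma net_detects_projection:
  fixes S N :: "(real^'n) set"
  assumes S: "subspace S" and NS: "N \<subseteq> S"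
    and net: "\<And>v. v \<in> flat_ball S (u / r) \<Longrightarrow> \<exists>v'\<in>N. dist v v' < 1/2"
    and r: "r > 0" and large: "r \<le> norm (orth_proj S z)" and flat: "linf_norm (orth_proj S z) \<le> u"
  shows "\<exists>v'\<in>N. r / 2 \<le> v' \<bullet> z"
proof -
  define w where "w = orth_proj S z"
  define R where "R = norm w"
  have R: "R > 0" "r \<le> R" using r large by (auto simp: R_def w_def)
  define v where "v = (1 / R) *\<^sub>R w"
  have "\<bar>v $ j\<bar> \<le> u / r" for j
  proof -
    have "\<bar>v $ j\<bar> = \<bar>w $ j\<bar> / R" using R by (simp add: v_def)
    also have "\<dots> \<le> u / R"
      using component_le_linf_norm[of w j] flat R by (simp add: w_def divide_right_mono)
    also have "\<dots> \<le> u / r"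
      using R r order.trans[OF abs_ge_zero component_le_linf_norm[of w j]] flat
      by (intro divide_left_mono) (auto simp: w_def)
    finally show ?thesis .
  qed
  moreover have "v \<in> S" using orth_proj_in[OF S] S by (simp add: v_def w_def subspace_scale)
  moreover have "norm v = 1" using R by (simp add: v_def R_def)
  ultimately have "v \<in> flat_ball S (u / r)" by (simp add: flat_ball_def)
  then obtain v' where v': "v' \<in> N" "dist v v' < 1/2" using net by blast
  have "v \<bullet> w = R" using R by (simp add: v_def R_def power2_norm_eq_inner[symmetric] power2_eq_square)
  moreover have "(v - v') \<bullet> w \<le> R / 2"
  proof -
    have "(v - v') \<bullet> w \<le> norm (v - v') * R" unfolding R_def by (rule norm_cauchy_schwarz)
    also have "\<dots> \<le> 1/2 * R" using v' R by (intro mult_right_mono) (auto simp: dist_norm)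
    finally show ?thesis by simp
  qed
  moreover have "v' \<bullet> w = v' \<bullet> z" using inner_orth_proj[OF S] v' NS by (auto simp: w_def)
  ultimately have "r / 2 \<le> v' \<bullet> z" using R by (simp add: inner_diff_left)
  then show ?thesis using v'(1) by blast
qed

text \<open>Choice of the constant \<open>\<kappa> = 18\<close>: at the threshold \<open>r/2\<close>, for unit vectors with coordinates at
  most \<open>u / r\<close>, the Bernstein exponent is at least \<open>9 (D + x)\<close>.\<close>
lemma net_radius_exponent:
  fixes \<sigma> c u x D r :: real
  assumes pos: "\<sigma> > 0" "c > 0" "u > 0" "x \<ge> 0" "D \<ge> 0" and r: "r > 0"
    and r_sq: "r^2 = 18^2 * ((\<sigma>^2 + 2 * c * u / 18) * (D + x))"
  shows "9 * (D + x) \<le> (r / 2)^2 / (2 * (1 * \<sigma>^2 + u / r * c * (r / 2)))"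
proof -
  have den: "1 * \<sigma>^2 + u / r * c * (r / 2) = \<sigma>^2 + c * u / 2" using r by (simp add: field_simps)
  have num: "(r / 2)^2 = (81 * \<sigma>^2 + 9 * c * u) * (D + x)" using r_sq by (simp add: power_divide field_simps)
  have "9 * (D + x) * (2 * (\<sigma>^2 + c * u / 2)) \<le> (81 * \<sigma>^2 + 9 * c * u) * (D + x)"
    using pos by (simp add: field_simps)
  moreover have "0 < 2 * (\<sigma>^2 + c * u / 2)" using pos by (simp add: add_pos_pos)
  ultimately show ?thesis
    unfolding den num by (simp add: le_divide_eq)
qed

text \<open>The size of the net is absorbed by the Bernstein bound, since \<open>ln 5 \<le> 9\<close>.\<close>
lemma five_pow_exp_le:
  assumes "x \<ge> 0"
  shows "5 ^ D * exp (- (9 * (real D + x))) \<le> exp (- x)"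
proof -
  have "ln (5::real) \<le> 9" using ln_le_minus_one[of 5] by simp
  have "(5::real) ^ D = exp (real D * ln 5)" by (simp add: exp_of_nat_mult)
  also have "\<dots> \<le> exp (real D * 9)" using \<open>ln 5 \<le> 9\<close> by (intro exp_mono mult_left_mono) auto
  finally have "5 ^ D * exp (- (9 * (real D + x))) \<le> exp (real D * 9) * exp (- (9 * (real D + x)))"
    by (intro mult_right_mono) auto
  also have "\<dots> = exp (- (9 * x))" by (simp add: exp_add[symmetric] algebra_simps)
  also have "\<dots> \<le> exp (- x)" using assms by simp
  finally show ?thesis .
qed

lemma (in prob_space) union_bound:
  assumes "finite I" and "E \<subseteq> (\<Union>i\<in>I. A i)" and "\<And>i. i \<in> I \<Longrightarrow> A i \<in> events"
    and "\<And>i. i \<in> I \<Longrightarrow> prob (A i) \<le> p"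
  shows "prob E \<le> real (card I) * p"
proof -
  have "prob E \<le> prob (\<Union>i\<in>I. A i)"
    using assms by (intro finite_measure_mono sets.finite_UN) auto
  also have "\<dots> \<le> (\<Sum>i\<in>I. prob (A i))"
    using assms by (intro finite_measure_subadditive_finite) auto
  also have "\<dots> \<le> (\<Sum>i\<in>I. p)"
    using assms by (intro sum_mono) auto
  finally show ?thesis by simp
qed

locale bernstein_coordinates = prob_space M for M :: "'a measure" +
  fixes \<xi> :: "'a \<Rightarrow> real^'n" and \<sigma> c :: real
  assumes indep_coords: "indep_vars (\<lambda>_. borel) (\<lambda>i \<omega>. \<xi> \<omega> $ i) UNIV"
    and sigma_pos: "\<sigma> > 0" and c_pos: "c > 0"
    and coord_mgf: "\<And>i l. \<bar>l\<bar> < 1 / c \<Longrightarrow>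
           integrable M (\<lambda>\<omega>. exp (l * \<xi> \<omega> $ i)) \<and>
           ln (expectation (\<lambda>\<omega>. exp (l * \<xi> \<omega> $ i))) \<le> l^2 * \<sigma>^2 / (2 * (1 - \<bar>l\<bar> * c))"
begin

lemma coord_measurable [measurable]: "(\<lambda>\<omega>. \<xi> \<omega> $ j) \<in> borel_measurable M"
  using indep_coords unfolding indep_vars_def by auto

lemma linear_form_measurable [measurable]: "(\<lambda>\<omega>. v \<bullet> \<xi> \<omega>) \<in> borel_measurable M"
  unfolding inner_vec_def by measurable

lemma linear_form_events: "{\<omega> \<in> space M. t \<le> v \<bullet> \<xi> \<omega>} \<in> events"
  by measurable

lemma coord_mgf_bound:
  assumes "\<bar>l\<bar> \<le> m" and "m * c < 1"
  shows "expectation (\<lambda>\<omega>. exp (l * \<xi> \<omega> $ i)) \<le> exp (l^2 * \<sigma>^2 / (2 * (1 - m * c)))"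
proof -
  let ?E = "expectation (\<lambda>\<omega>. exp (l * \<xi> \<omega> $ i))"
  have lc: "\<bar>l\<bar> * c \<le> m * c"
    using assms(1) c_pos by (simp add: mult_right_mono)
  then have "\<bar>l\<bar> * c < 1"
    using assms(2) by linarith
  then have l: "\<bar>l\<bar> < 1 / c"
    using c_pos by (simp add: field_simps)
  from lc have "l^2 * \<sigma>^2 / (2 * (1 - \<bar>l\<bar> * c)) \<le> l^2 * \<sigma>^2 / (2 * (1 - m * c))"
    using assms(2) by (intro divide_left_mono) auto
  then have ln_E: "ln ?E \<le> l^2 * \<sigma>^2 / (2 * (1 - m * c))"
    using coord_mgf[where i=i, OF l] by linarith
  show ?thesis
  proof (cases "?E > 0")
    case True
    then show ?thesis using ln_E by (metis exp_le_cancel_iff exp_ln)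
  next
    case False
    then show ?thesis using exp_gt_zero[of "l^2 * \<sigma>^2 / (2 * (1 - m * c))"] by linarith
  qed
qed

text \<open>By independence, the moment generating function of \<open>\<langle>v, \<xi>\<rangle>\<close> is the product of those of
  the coordinates, which gives a Bernstein-type bound depending on \<open>\<Sum> v\<^sub>j\<^sup>2 \<le> V\<close> and
  \<open>max |v\<^sub>j| \<le> b\<close>.\<close>
lemma linear_form_mgf_bound:
  assumes V: "(\<Sum>j\<in>UNIV. (v$j)^2) \<le> V" and b: "\<And>j. \<bar>v$j\<bar> \<le> b"
    and l: "l \<ge> 0" "l * b * c < 1"
  shows "integrable M (\<lambda>\<omega>. exp (l * (v \<bullet> \<xi> \<omega>)))"
    and "expectation (\<lambda>\<omega>. exp (l * (v \<bullet> \<xi> \<omega>))) \<le> exp (l^2 * V * \<sigma>^2 / (2 * (1 - l * b * c)))"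
proof -
  define X where "X j = (\<lambda>\<omega>. exp ((l * v$j) * \<xi> \<omega> $ j))" for j
  have lvj: "\<bar>l * v$j\<bar> \<le> l * b" for j
    using b[of j] l by (simp add: abs_mult mult_left_mono)
  have lvj_c: "\<bar>l * v$j\<bar> < 1 / c" for j
  proof -
    have "\<bar>l * v$j\<bar> * c \<le> l * b * c"
      using mult_right_mono[OF lvj[of j], of c] c_pos by simp
    then have "\<bar>l * v$j\<bar> * c < 1"
      using l(2) by linarith
    then show ?thesis using c_pos by (simp add: field_simps)
  qed
  have int_X: "integrable M (X j)" for j
    using coord_mgf[where i=j, OF lvj_c[of j]] by (simp add: X_def)
  have indep_X: "indep_vars (\<lambda>_. borel) X UNIV"
    unfolding X_def
    by (rule indep_vars_compose2[where Y="\<lambda>j x. exp ((l * v$j) * x)", OF indep_coords]) simp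
  have exp_prod: "(\<lambda>\<omega>. exp (l * (v \<bullet> \<xi> \<omega>))) = (\<lambda>\<omega>. \<Prod>j\<in>UNIV. X j \<omega>)"
    by (simp add: X_def inner_vec_def sum_distrib_left mult.assoc exp_sum)
  show "integrable M (\<lambda>\<omega>. exp (l * (v \<bullet> \<xi> \<omega>)))"
    unfolding exp_prod using indep_X int_X by (intro indep_vars_integrable) auto
  have "expectation (\<lambda>\<omega>. exp (l * (v \<bullet> \<xi> \<omega>))) = (\<Prod>j\<in>UNIV. expectation (X j))"
    unfolding exp_prod using indep_X int_X by (intro indep_vars_lebesgue_integral) auto
  also have "\<dots> \<le> (\<Prod>j\<in>UNIV. exp ((l * v$j)^2 * \<sigma>^2 / (2 * (1 - l * b * c))))"
    using coord_mgf_bound[OF lvj] l(2) by (intro prod_mono) (auto simp: X_def mult.assoc)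
  also have "\<dots> = exp (l^2 * \<sigma>^2 / (2 * (1 - l * b * c)) * (\<Sum>j\<in>UNIV. (v$j)^2))"
    by (simp add: exp_sum[symmetric] sum_distrib_left sum_divide_distrib power_mult_distrib mult_ac)
  also have "\<dots> \<le> exp (l^2 * \<sigma>^2 / (2 * (1 - l * b * c)) * V)"
    using V l(2) by (intro exp_mono mult_left_mono) auto
  finally show "expectation (\<lambda>\<omega>. exp (l * (v \<bullet> \<xi> \<omega>))) \<le> exp (l^2 * V * \<sigma>^2 / (2 * (1 - l * b * c)))"
    by (simp add: algebra_simps)
qed

text \<open>Bernstein's inequality for linear forms, from the Chernoff bound with
  \<open>l = t / (V \<sigma>\<^sup>2 + b c t)\<close>.\<close>
lemma bernstein_linear_form:
  assumes V: "(\<Sum>j\<in>UNIV. (v$j)^2) \<le> V" "V > 0" and b: "\<And>j. \<bar>v$j\<bar> \<le> b" "b > 0"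
    and t: "t > 0"
  shows "prob {\<omega> \<in> space M. t \<le> v \<bullet> \<xi> \<omega>} \<le> exp (- (t^2 / (2 * (V * \<sigma>^2 + b * c * t))))"
proof -
  define Q where "Q = V * \<sigma>^2 + b * c * t"
  have Q: "Q > 0" using V b c_pos t sigma_pos by (simp add: Q_def add_pos_pos)
  define l where "l = t / Q"
  have l: "l > 0" using t Q by (simp add: l_def)
  have lbc: "1 - l * b * c = V * \<sigma>^2 / Q" using Q by (simp add: l_def Q_def field_simps)
  have "V * \<sigma>^2 / Q > 0" using V sigma_pos Q by simp
  then have lbc_pos: "l * b * c < 1" using lbc by linarith
  have "{\<omega> \<in> space M. t \<le> v \<bullet> \<xi> \<omega>} = {\<omega> \<in> space M. exp (l * t) \<le> exp (l * (v \<bullet> \<xi> \<omega>))}"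
    using l by auto
  then have "prob {\<omega> \<in> space M. t \<le> v \<bullet> \<xi> \<omega>} \<le> expectation (\<lambda>\<omega>. exp (l * (v \<bullet> \<xi> \<omega>))) / exp (l * t)"
    using linear_form_mgf_bound(1)[OF V(1) b(1) less_imp_le[OF l] lbc_pos]
    by (simp only:) (rule integral_Markov_inequality_measure[where A="space M"], auto)
  also have "\<dots> \<le> exp (l^2 * V * \<sigma>^2 / (2 * (1 - l * b * c))) / exp (l * t)"
    using linear_form_mgf_bound(2)[OF V(1) b(1) less_imp_le[OF l] lbc_pos] by (simp add: divide_right_mono)
  also have "\<dots> = exp (- (t^2 / (2 * Q)))"
    unfolding exp_diff[symmetric] lbc using Q V sigma_pos by (simp add: l_def field_simps power2_eq_square)
  finally show ?thesis by (simp add: Q_def)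
qed

lemma flat_direction_tail:
  assumes v: "v \<in> flat_ball S (u / r)" and u: "u > 0" and x: "x \<ge> 0" and D: "D \<ge> 0"
    and r: "r > 0" and r_sq: "r^2 = 18^2 * ((\<sigma>^2 + 2 * c * u / 18) * (D + x))"
  shows "prob {\<omega> \<in> space M. r / 2 \<le> v \<bullet> \<xi> \<omega>} \<le> exp (- (9 * (D + x)))"
proof -
  have "prob {\<omega> \<in> space M. r / 2 \<le> v \<bullet> \<xi> \<omega>}
      \<le> exp (- ((r / 2)^2 / (2 * (1 * \<sigma>^2 + u / r * c * (r / 2)))))"
    using v r u by (intro bernstein_linear_form) (auto simp: flat_ball_def sum_squares_components power_le_one)
  also have "\<dots> \<le> exp (- (9 * (D + x)))"
    using net_radius_exponent[OF sigma_pos c_pos u x D r r_sq] by simp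
  finally show ?thesis .
qed

text \<open>With
  \<open>r = 18 sqrt ((\<sigma>\<^sup>2 + 2 c u / 18) (dim S + x))\<close>, the event is covered by the events
  \<open>\<langle>v, \<xi>\<rangle> \<ge> r / 2\<close> for \<open>v\<close> in a \<open>1/2\<close>-net of \<open>flat_ball S (u / r)\<close>, each of probability at most
  \<open>exp (-9 (dim S + x))\<close> by Bernstein's inequality.\<close>
lemma norm_projection_tail:
  assumes S: "subspace S" and x: "x > 0" and u: "u > 0"
  shows "prob {\<omega> \<in> space M.
            (norm (orth_proj S (\<xi> \<omega>)))^2 \<ge> (18::real)^2 * (\<sigma>^2 + 2 * c * u / 18) * (real (dim S) + x)
          \<and> linf_norm (orth_proj S (\<xi> \<omega>)) \<le> u} \<le> exp (- x)"
    (is "prob ?E \<le> _")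
proof -
  define K where "K = (\<sigma>^2 + 2 * c * u / 18) * (real (dim S) + x)"
  have K: "K > 0" using sigma_pos c_pos u x by (simp add: K_def add_pos_nonneg)
  define r where "r = 18 * sqrt K"
  have r: "r > 0" using K by (simp add: r_def)
  have r_sq: "r^2 = 18^2 * K" using K by (simp add: r_def power_mult_distrib)
  have flat_S: "flat_ball S (u / r) \<subseteq> S" and flat_norm: "\<And>v. v \<in> flat_ball S (u / r) \<Longrightarrow> norm v \<le> 1"
    by (auto simp: flat_ball_def)
  obtain N where N: "finite N" "N \<subseteq> flat_ball S (u / r)" "real (card N) \<le> 5 ^ dim S"
    and net: "\<And>v. v \<in> flat_ball S (u / r) \<Longrightarrow> \<exists>v'\<in>N. dist v v' < 1/2"
    using half_net_exists[OF S flat_S flat_norm] by blast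
  let ?A = "\<lambda>v. {\<omega> \<in> space M. r / 2 \<le> v \<bullet> \<xi> \<omega>}"
  have cover: "?E \<subseteq> (\<Union>v\<in>N. ?A v)"
  proof
    fix \<omega> assume \<omega>: "\<omega> \<in> ?E"
    have "(18::real)^2 * (\<sigma>^2 + 2 * c * u / 18) * (real (dim S) + x) \<le> (norm (orth_proj S (\<xi> \<omega>)))^2"
      using \<omega> by blast
    then have "r^2 \<le> (norm (orth_proj S (\<xi> \<omega>)))^2"
      by (simp only: r_sq K_def mult.assoc)
    then have "r \<le> norm (orth_proj S (\<xi> \<omega>))"
      by (rule power2_le_imp_le) simp
    then obtain v where "v \<in> N" "r / 2 \<le> v \<bullet> \<xi> \<omega>"
      using net_detects_projection[OF S _ net r] N(2) flat_S \<omega> by blast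
    then show "\<omega> \<in> (\<Union>v\<in>N. ?A v)" using \<omega> by auto
  qed
  have each: "prob (?A v) \<le> exp (- (9 * (real (dim S) + x)))" if "v \<in> N" for v
    using that N(2) u x r r_sq by (intro flat_direction_tail) (auto simp: K_def)
  have "prob ?E \<le> real (card N) * exp (- (9 * (real (dim S) + x)))"
    using N(1) cover linear_form_events each by (rule union_bound)
  also have "\<dots> \<le> 5 ^ dim S * exp (- (9 * (real (dim S) + x)))"
    using N(3) by (intro mult_right_mono) auto
  also have "\<dots> \<le> exp (- x)"
    using x by (intro five_pow_exp_le) simp
  finally show ?thesis .
qed

text \<open>Tail of one coordinate of \<open>\<Pi>\<^sub>S \<xi>\<close>: Bernstein's inequality for the linear forms
  \<open>\<plusminus>\<langle>\<Pi>\<^sub>S e\<^sub>i, \<xi>\<rangle>\<close>, whose coefficient vectors have norm at most \<open>\<Lambda>\<^sub>2(S)\<close> and entries at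
  most \<open>\<Lambda>\<^sub>2(S)\<^sup>2\<close>.\<close>
lemma projected_coordinate_tail:
  assumes S: "subspace S" and x: "x > 0" and L: "Lambda2 S > 0"
  shows "prob ({\<omega> \<in> space M. x \<le> orth_proj S (axis i 1) \<bullet> \<xi> \<omega>}
               \<union> {\<omega> \<in> space M. x \<le> (- orth_proj S (axis i 1)) \<bullet> \<xi> \<omega>})
           \<le> 2 * exp (- (x^2 / (2 * (Lambda2 S)^2 * (\<sigma>^2 + c * x))))"
proof -
  define e where "e = orth_proj S (axis i (1::real))"
  define bnd where "bnd = exp (- (x^2 / (2 * ((Lambda2 S)^2 * \<sigma>^2 + (Lambda2 S)^2 * c * x))))"
  have squares: "(\<Sum>j\<in>UNIV. (e $ j)^2) \<le> (Lambda2 S)^2"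
    using norm_orth_proj_axis_le[of S i] Lambda2_nonneg[of S]
    by (simp add: e_def sum_squares_components power_mono)
  have entries: "\<bar>e $ j\<bar> \<le> (Lambda2 S)^2" for j
    unfolding e_def by (rule orth_proj_axis_component_le[OF S])
  have "prob ({\<omega> \<in> space M. x \<le> e \<bullet> \<xi> \<omega>} \<union> {\<omega> \<in> space M. x \<le> (- e) \<bullet> \<xi> \<omega>})
      \<le> prob {\<omega> \<in> space M. x \<le> e \<bullet> \<xi> \<omega>} + prob {\<omega> \<in> space M. x \<le> (- e) \<bullet> \<xi> \<omega>}"
    by (intro measure_Un_le linear_form_events)
  also have "\<dots> \<le> bnd + bnd"
    unfolding bnd_def using squares entries L x
    by (intro add_mono bernstein_linear_form) auto
  also have "bnd + bnd = 2 * exp (- (x^2 / (2 * (Lambda2 S)^2 * (\<sigma>^2 + c * x))))"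
    by (simp add: bnd_def algebra_simps)
  finally show ?thesis unfolding e_def .
qed

lemma sup_norm_projection_tail:
  assumes S: "subspace S" and x: "x > 0"
  shows "prob {\<omega> \<in> space M. linf_norm (orth_proj S (\<xi> \<omega>)) \<ge> x}
           \<le> 2 * real CARD('n) * exp (- (x^2 / (2 * (Lambda2 S)^2 * (\<sigma>^2 + c * x))))"
    (is "prob ?E \<le> _")
proof -
  define e where "e i = orth_proj S (axis i (1::real))" for i :: 'n
  show ?thesis
  proof (cases "Lambda2 S = 0")
    case True
    have "prob ?E \<le> 1" by (rule prob_le_1)
    also have "\<dots> \<le> 2 * real CARD('n)"
    proof -
      have "0 < CARD('n)" by (rule finite_UNIV_card_ge_0) simp
      then have "real 1 \<le> real CARD('n)" by (intro of_nat_mono) simp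
      then show ?thesis by linarith
    qed
    finally show ?thesis using True by simp
  next
    case False
    then have L: "Lambda2 S > 0" using Lambda2_nonneg[of S] by simp
    define bnd where "bnd = exp (- (x^2 / (2 * (Lambda2 S)^2 * (\<sigma>^2 + c * x))))"
    let ?B = "\<lambda>i. {\<omega> \<in> space M. x \<le> e i \<bullet> \<xi> \<omega>} \<union> {\<omega> \<in> space M. x \<le> (- e i) \<bullet> \<xi> \<omega>}"
    have cover: "?E \<subseteq> (\<Union>i\<in>UNIV. ?B i)"
    proof
      fix \<omega> assume \<omega>: "\<omega> \<in> ?E"
      obtain i where "linf_norm (orth_proj S (\<xi> \<omega>)) = \<bar>e i \<bullet> \<xi> \<omega>\<bar>"
        using linf_norm_attained orth_proj_component[OF S] by (metis e_def)
      then have "x \<le> \<bar>e i \<bullet> \<xi> \<omega>\<bar>" using \<omega> by simp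
      then show "\<omega> \<in> (\<Union>i\<in>UNIV. ?B i)" using \<omega> by (auto simp: abs_if split: if_splits)
    qed
    have each: "prob (?B i) \<le> 2 * bnd" for i
      unfolding e_def bnd_def by (rule projected_coordinate_tail[OF S x L])
    have "prob ?E \<le> real (card (UNIV :: 'n set)) * (2 * bnd)"
      by (rule union_bound[OF _ cover]) (use each linear_form_events in auto)
    then show ?thesis by (simp add: bnd_def)
  qed
qed

end

text \<open>The main theorem: both claims are instances of the tail bounds above, with \<open>dim S = D\<close>.\<close>
theorem mainTheorem3:
  fixes M :: "'a measure" and S :: "(real^'n) set" and \<xi> :: "'a \<Rightarrow> real^'n"
    and \<sigma> c :: real and D :: nat
  assumes "prob_space M"
    and "CARD('n) \<ge> 2"
    and "subspace S" and "dim S = D"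
    and "prob_space.indep_vars M (\<lambda>_. borel) (\<lambda>i \<omega>. \<xi> \<omega> $ i) UNIV"
    and "\<sigma> > 0" and "c > 0"
    and "\<And>i l. \<bar>l\<bar> < 1 / c \<Longrightarrow>
           integrable M (\<lambda>\<omega>. exp (l * \<xi> \<omega> $ i)) \<and>
           ln (prob_space.expectation M (\<lambda>\<omega>. exp (l * \<xi> \<omega> $ i)))
             \<le> l^2 * \<sigma>^2 / (2 * (1 - \<bar>l\<bar> * c))"
  shows "(\<forall>x u. x > 0 \<longrightarrow> u > 0 \<longrightarrow>
            measure M {\<omega> \<in> space M.
               (norm (orth_proj S (\<xi> \<omega>)))^2 \<ge> (18::real)^2 * (\<sigma>^2 + 2 * c * u / 18) * (real D + x)
             \<and> linf_norm (orth_proj S (\<xi> \<omega>)) \<le> u} \<le> exp (- x))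
       \<and> (\<forall>x. x > 0 \<longrightarrow>
            measure M {\<omega> \<in> space M. linf_norm (orth_proj S (\<xi> \<omega>)) \<ge> x}
              \<le> 2 * real CARD('n) * exp (- (x^2 / (2 * (Lambda2 S)^2 * (\<sigma>^2 + c * x)))))"
proof -
  interpret bernstein_coordinates M \<xi> \<sigma> c
    using assms(1,5-8) by (intro bernstein_coordinates.intro bernstein_coordinates_axioms.intro) auto
  show ?thesis
    using norm_projection_tail[OF assms(3)] sup_norm_projection_tail[OF assms(3)] assms(4) by auto
qed

end
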